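(* Let $S\in\mathbb{R}^{2n\times 2n}$ be a symplectic matrix, i.e. $S^TJS=J$. Then there exists a P-SympNet $\Phi_h$ of degree $d\ge 2$ with $k$ layers such that $Sx=\Phi_h(x)$ for all $x\in\mathbb{R}^{2n}$. Moreover: (i) for arbitrary symplectic $S$ one can take $k\le 5n$; (ii) if $S=\begin{pmatrix}A&B\\ C&D\end{pmatrix}$ with $A,B,C,D\in\mathbb{R}^{n\times n}$ and $\det A\neq 0$, one can take $k\le 4n$; (iii) if $S=e^{hJM}$ with $M=M^T\in\mathbb{R}^{2n\times 2n}$ and $h>0$ sufficiently small, then there is such a P-SympNet with time step $h$ and $k\le 2n$.
   Context: $x=(p,q)\in\mathbb{R}^{2n}$, $J=\begin{pmatrix}0&-I\\ I&0\end{pmatrix}$. A P-SympNet of degree $d$ with $k$ layers and time step $h$ is a composition $\phi^{H_k}_h\circ\cdots\circ\phi^{H_1}_h$ where $H_i(x)=\alpha_i(w_i^Tx)$ with $w_i\in\mathbb{R}^{2n}$ and $\alpha_i(z)=\sum_{j=1}^d a_{ij}z^j$ a real univariate polynomial; each layer is the exact flow of $\dot x=J\nabla H_i(x)$, given explicitly by $\phi^{H_i}_h(x)=x+h\,\alpha_i'(w_i^Tx)\,Jw_i$. *)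

theory Defs
  imports "HOL-Analysis.Analysis" "HOL-Computational_Algebra.Polynomial"
begin

text \<open>Phase space R^{2n} is modelled as real ^ ('n + 'n): index Inl i is q_i, Inr i is p_i,
  where n = CARD('n).\<close>

definition Jmat :: "real ^ ('n::finite + 'n) ^ ('n + 'n)" where
  "Jmat = (\<chi> a b. case (a, b) of
       (Inl i, Inr j) \<Rightarrow> (if i = j then -1 else 0)
     | (Inr i, Inl j) \<Rightarrow> (if i = j then 1 else 0)
     | _ \<Rightarrow> 0)"

definition symplectic :: "real ^ ('n::finite + 'n) ^ ('n + 'n) \<Rightarrow> bool" where
  "symplectic S \<longleftrightarrow> transpose S ** Jmat ** S = Jmat"

definition block_A :: "real ^ ('n::finite + 'n) ^ ('n + 'n) \<Rightarrow> real ^ 'n ^ 'n" where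
  "block_A S = (\<chi> i j. S $ Inl i $ Inl j)"

primrec mat_pow :: "'a::{semiring_1} ^ 'm::finite ^ 'm \<Rightarrow> nat \<Rightarrow> 'a ^ 'm ^ 'm" where
  "mat_pow A 0 = mat 1"
| "mat_pow A (Suc k) = A ** mat_pow A k"

definition mat_exp :: "real ^ 'm::finite ^ 'm \<Rightarrow> real ^ 'm ^ 'm" where
  "mat_exp A = (\<Sum>k. (1 / fact k) *\<^sub>R mat_pow A k)"

text \<open>A P-SympNet layer with H(x) = alpha(w^T x): phi_h(x) = x + h alpha'(w^T x) J w.
  alpha is a real polynomial without constant term of degree at most d.\<close>
definition psymp_layer :: "real \<Rightarrow> (real ^ ('n::finite + 'n)) \<times> real poly
     \<Rightarrow> real ^ ('n + 'n) \<Rightarrow> real ^ ('n + 'n)" where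
  "psymp_layer h l x = x + (h * poly (pderiv (snd l)) (fst l \<bullet> x)) *\<^sub>R (Jmat *v fst l)"

definition valid_psymp :: "nat \<Rightarrow> ((real ^ ('n::finite + 'n)) \<times> real poly) list \<Rightarrow> bool" where
  "valid_psymp d ls \<longleftrightarrow> (\<forall>l \<in> set ls. degree (snd l) \<le> d \<and> coeff (snd l) 0 = 0)"

text \<open>Network [l_1,...,l_k] = phi^{H_k}_h o ... o phi^{H_1}_h (first layer applied first).\<close>
definition psympnet :: "real \<Rightarrow> ((real ^ ('n::finite + 'n)) \<times> real poly) list
     \<Rightarrow> real ^ ('n + 'n) \<Rightarrow> real ^ ('n + 'n)" where
  "psympnet h ls x = fold (psymp_layer h) ls x"

end

theory Submission
  imports Defs
begin

text \<open>A single layer with quadratic potential realises any symplectic transvection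
  x \<mapsto> x + t \<omega>(u, x) u, so it suffices to write linear symplectic maps as short
  products of transvections. This goes by induction on the codimension of the fixed space: if
  \<omega>(f x, x) \<noteq> 0, composing f with the transvection along f x - x that sends f x back to x keeps
  every fixed point of f and fixes x as well; if \<omega>(f x, x) vanishes identically, one extra
  transvection first produces a vector with \<omega>(f x, x) \<noteq> 0. Hence 2 transvections per dimension,
  4n layers, suffice for every symplectic matrix. If -1 is not an eigenvalue of f, the point x can be
  chosen so that the peeled map again lacks the eigenvalue -1, and one transvection per dimension
  suffices. This applies to e^{hJM}, which preserves \<omega> because JM is Hamiltonian and which is
  close to the identity for small h, giving 2n layers.\<close>

type_synonym 'n phase = "real ^ ('n + 'n)"

lemma sum_UNIV_Plus:
  fixes g :: "'a::finite + 'b::finite \<Rightarrow> 'c::comm_monoid_add"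
  shows "(\<Sum>a\<in>UNIV. g a) = (\<Sum>i\<in>UNIV. g (Inl i)) + (\<Sum>i\<in>UNIV. g (Inr i))"
  by (subst UNIV_Plus_UNIV[symmetric], subst sum.Plus) (simp_all add: o_def)

lemma Jmat_mult_Inl [simp]: "(Jmat *v x) $ Inl i = - x $ Inr i"
  and Jmat_mult_Inr [simp]: "(Jmat *v x) $ Inr i = x $ Inl i"
  unfolding matrix_vector_mult_def Jmat_def
  by (simp_all add: sum_UNIV_Plus if_distrib[of "\<lambda>c. c * _"] sum.delta cong: if_cong)

lemma Jmat_mult_minus [simp]: "Jmat *v (- x) = - (Jmat *v x)"
  by (simp add: vec_eq_iff split_sum_all)

lemma Jmat_Jmat: "Jmat *v (Jmat *v x) = - x"
  by (simp add: vec_eq_iff split_sum_all)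

lemma inner_Jmat_Jmat: "(Jmat *v x) \<bullet> (Jmat *v y) = x \<bullet> (y :: 'n::finite phase)"
  unfolding inner_vec_def by (simp add: sum_UNIV_Plus add.commute)

definition symp_form :: "'n::finite phase \<Rightarrow> 'n phase \<Rightarrow> real" where
  "symp_form p q = p \<bullet> (Jmat *v q)"

lemma symp_form_commute: "symp_form p q = - symp_form q p"
proof -
  have "p \<bullet> (Jmat *v q) = (Jmat *v p) \<bullet> (Jmat *v (Jmat *v q))"
    by (simp only: inner_Jmat_Jmat)
  then show ?thesis
    by (simp add: symp_form_def Jmat_Jmat inner_commute)
qed

lemma symp_form_self [simp]: "symp_form p p = 0"
  using symp_form_commute[of p p] by simp

lemma symp_form_simps [simp]:
  "symp_form (p + p') q = symp_form p q + symp_form p' q"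
  "symp_form p (q + q') = symp_form p q + symp_form p q'"
  "symp_form (p - p') q = symp_form p q - symp_form p' q"
  "symp_form p (q - q') = symp_form p q - symp_form p q'"
  "symp_form (- p) q = - symp_form p q"
  "symp_form p (- q) = - symp_form p q"
  "symp_form (c *\<^sub>R p) q = c * symp_form p q"
  "symp_form p (c *\<^sub>R q) = c * symp_form p q"
  "symp_form 0 q = 0"
  "symp_form p 0 = 0"
  by (simp_all add: symp_form_def inner_simps matrix_vector_right_distrib
      matrix_vector_mult_diff_distrib matrix_vector_mult_scaleR)

lemma symp_form_nondegenerate:
  assumes "\<And>q. symp_form p q = 0" shows "p = 0"
proof -
  have "symp_form p (- (Jmat *v p)) = p \<bullet> p"
    by (simp add: symp_form_def Jmat_Jmat)
  then show ?thesis using assms[of "- (Jmat *v p)"] by simp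
qed

definition symplectic_map :: "('n::finite phase \<Rightarrow> 'n phase) \<Rightarrow> bool" where
  "symplectic_map f \<longleftrightarrow> linear f \<and> (\<forall>x y. symp_form (f x) (f y) = symp_form x y)"

lemma symplectic_mapD:
  "symplectic_map f \<Longrightarrow> linear f"
  "symplectic_map f \<Longrightarrow> symp_form (f x) (f y) = symp_form x y"
  by (simp_all add: symplectic_map_def)

lemma symplectic_map_comp:
  "symplectic_map f \<Longrightarrow> symplectic_map g \<Longrightarrow> symplectic_map (f \<circ> g)"
  by (simp add: symplectic_map_def linear_compose)

lemma symplectic_map_matrix:
  fixes S :: "real ^ ('n::finite + 'n) ^ ('n + 'n)"
  assumes "symplectic S"
  shows "symplectic_map ((*v) S)"
proof -
  have "symp_form (S *v x) (S *v y) = symp_form x y" for x y :: "'n phase"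
  proof -
    have "symp_form (S *v x) (S *v y) = x \<bullet> (transpose S *v (Jmat *v (S *v y)))"
      unfolding symp_form_def by (metis dot_lmul_matrix vector_transpose_matrix)
    also have "\<dots> = x \<bullet> ((transpose S ** Jmat ** S) *v y)"
      by (simp add: matrix_vector_mul_assoc matrix_mul_assoc)
    finally show ?thesis
      using assms by (simp add: symplectic_def symp_form_def)
  qed
  then show ?thesis
    by (simp add: symplectic_map_def matrix_vector_mul_linear)
qed

lemma symplectic_map_inj:
  assumes "symplectic_map f" shows "inj f"
proof (rule linear_injective_0[OF symplectic_mapD(1)[OF assms], THEN iffD2], intro allI impI)
  fix x assume "f x = 0"
  then have "symp_form x q = 0" for q
    using symplectic_mapD(2)[OF assms, of x q] by simp
  then show "x = 0" by (rule symp_form_nondegenerate)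
qed

lemma symplectic_map_surj: "symplectic_map f \<Longrightarrow> surj f"
  using linear_injective_imp_surjective symplectic_map_inj symplectic_mapD(1) by blast

lemma symp_form_displacement_fixed:
  assumes "symplectic_map f" "f y = y"
  shows "symp_form (f x - x) y = 0"
  using symplectic_mapD(2)[OF assms(1), of x y] assms(2) by simp

definition transvection :: "'n::finite phase \<Rightarrow> real \<Rightarrow> 'n phase \<Rightarrow> 'n phase" where
  "transvection u t x = x + (t * symp_form u x) *\<^sub>R u"

definition transvections :: "('n::finite phase \<times> real) list \<Rightarrow> 'n phase \<Rightarrow> 'n phase" where
  "transvections L = fold (\<lambda>(u, t). transvection u t) L"

lemma transvections_Nil [simp]: "transvections [] = id"
  and transvections_Cons [simp]: "transvections ((u, t) # L) = transvections L \<circ> transvection u t"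
  and transvections_snoc [simp]: "transvections (L @ [(u, t)]) = transvection u t \<circ> transvections L"
  by (simp_all add: transvections_def fun_eq_iff)

lemma transvection_inverse: "transvection u t \<circ> transvection u (- t) = id"
  by (simp add: fun_eq_iff transvection_def)

lemma transvection_fixes: "symp_form u y = 0 \<Longrightarrow> transvection u t y = y"
  by (simp add: transvection_def)

lemma symplectic_map_transvection: "symplectic_map (transvection u t)"
  unfolding symplectic_map_def
proof (intro conjI allI)
  show "linear (transvection u t)"
    by (rule linearI) (simp_all add: transvection_def algebra_simps)
  fix x y
  have "symp_form u x = - symp_form x u"
    by (rule symp_form_commute)
  then show "symp_form (transvection u t x) (transvection u t y) = symp_form x y"
    by (simp add: transvection_def algebra_simps)
qed

definition fixed_space :: "('a \<Rightarrow> 'a) \<Rightarrow> 'a set" where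
  "fixed_space f = {x. f x = x}"

lemma subspace_fixed_space: "linear f \<Longrightarrow> subspace (fixed_space f)"
  by (simp add: subspace_def fixed_space_def linear_0 linear_add linear_scale)

lemma dim_fixed_space_less:
  fixes f g :: "'a::euclidean_space \<Rightarrow> 'a"
  assumes "linear f" "fixed_space f \<subseteq> fixed_space g" "g x = x" "f x \<noteq> x"
  shows "dim (fixed_space f) < dim (fixed_space g)"
proof -
  have span: "span (fixed_space f) = fixed_space f"
    using subspace_fixed_space[OF assms(1)] by (rule span_eq_iff[THEN iffD2])
  have "x \<notin> span (fixed_space f)"
    unfolding span using assms(4) by (simp add: fixed_space_def)
  then have "dim (insert x (fixed_space f)) = dim (fixed_space f) + 1"
    by (simp add: dim_insert)
  moreover have "dim (insert x (fixed_space f)) \<le> dim (fixed_space g)"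
    using assms(2,3) by (intro dim_subset) (auto simp: fixed_space_def)
  ultimately show ?thesis
    by simp
qed

lemma fixed_space_full_dim:
  fixes f :: "'a::euclidean_space \<Rightarrow> 'a"
  assumes "linear f" "DIM('a) \<le> dim (fixed_space f)"
  shows "f = id"
proof -
  have "dim (fixed_space f) = DIM('a)"
    using assms(2) dim_subset_UNIV[of "fixed_space f"] by simp
  then have "span (fixed_space f) = UNIV"
    by (metis dim_eq_full)
  then have "fixed_space f = UNIV"
    using subspace_fixed_space[OF assms(1)] by (metis span_eq_iff)
  then show ?thesis
    by (simp add: fixed_space_def fun_eq_iff set_eq_iff)
qed

definition polynomial_on_lines :: "('a::real_vector \<Rightarrow> real) \<Rightarrow> bool" where
  "polynomial_on_lines q \<longleftrightarrow> (\<forall>a b. \<exists>p. \<forall>s. q (a + s *\<^sub>R b) = poly p s)"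

lemma polynomial_on_lines_linear:
  assumes "linear l" shows "polynomial_on_lines l"
  unfolding polynomial_on_lines_def
proof (intro allI)
  fix a b
  show "\<exists>p. \<forall>s. l (a + s *\<^sub>R b) = poly p s"
    using assms by (intro exI[of _ "[:l a, l b:]"]) (simp add: linear_add linear_scale)
qed

lemma polynomial_on_lines_symp_form:
  assumes "linear P" "linear Q"
  shows "polynomial_on_lines (\<lambda>x. symp_form (P x) (Q x))"
  unfolding polynomial_on_lines_def
proof (intro allI)
  fix a b
  let ?p = "[:symp_form (P a) (Q a), symp_form (P a) (Q b) + symp_form (P b) (Q a),
             symp_form (P b) (Q b):]"
  show "\<exists>p. \<forall>s. symp_form (P (a + s *\<^sub>R b)) (Q (a + s *\<^sub>R b)) = poly p s"
    using assms by (intro exI[of _ ?p]) (simp add: linear_add linear_scale algebra_simps)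
qed

text \<open>Restricted to the line through a and b, both functions are nonzero polynomials, so
  they vanish simultaneously only at finitely many points.\<close>
lemma polynomial_on_lines_common_nonzero:
  assumes "polynomial_on_lines q" "polynomial_on_lines r" "q a \<noteq> 0" "r b \<noteq> 0"
  shows "\<exists>x. q x \<noteq> 0 \<and> r x \<noteq> 0"
proof -
  obtain p p' where p: "\<And>s. q (a + s *\<^sub>R (b - a)) = poly p s"
    and p': "\<And>s. r (a + s *\<^sub>R (b - a)) = poly p' s"
    using assms(1,2) unfolding polynomial_on_lines_def by metis
  have "p \<noteq> 0" "p' \<noteq> 0"
    using p[of 0] p'[of 1] assms(3,4) by auto
  then have "finite ({s. poly p s = 0} \<union> {s. poly p' s = 0})"
    by (simp add: poly_roots_finite)
  then obtain s :: real where "s \<notin> {s. poly p s = 0} \<union> {s. poly p' s = 0}"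
    by (metis ex_new_if_finite infinite_UNIV_char_0)
  then show ?thesis
    using p[of s] p'[of s] by (intro exI[of _ "a + s *\<^sub>R (b - a)"]) auto
qed

lemma transvection_peel:
  assumes f: "symplectic_map f" and nz: "symp_form (f x) x \<noteq> 0"
    and g: "g = transvection (f x - x) (- (1 / symp_form (f x) x)) \<circ> f"
  shows "symplectic_map g" "f = transvection (f x - x) (1 / symp_form (f x) x) \<circ> g"
    "dim (fixed_space f) < dim (fixed_space g)"
proof -
  let ?u = "f x - x" and ?t = "1 / symp_form (f x) x"
  show "symplectic_map g"
    unfolding g by (intro symplectic_map_comp symplectic_map_transvection f)
  show "f = transvection ?u ?t \<circ> g"
    unfolding g by (simp add: comp_assoc[symmetric] transvection_inverse)
  have "fixed_space f \<subseteq> fixed_space g"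
  proof
    fix y assume "y \<in> fixed_space f"
    then have "f y = y" by (simp add: fixed_space_def)
    then show "y \<in> fixed_space g"
      using symp_form_displacement_fixed[OF f] by (simp add: g fixed_space_def transvection_fixes)
  qed
  moreover have "g x = x"
  proof -
    have "symp_form ?u (f x) = symp_form (f x) x"
      using symp_form_commute[of x "f x"] by simp
    then show ?thesis
      using nz by (simp add: g transvection_def)
  qed
  moreover have "f x \<noteq> x"
    using nz by auto
  ultimately show "dim (fixed_space f) < dim (fixed_space g)"
    using dim_fixed_space_less symplectic_mapD(1)[OF f] by blast
qed

lemma isotropic_symplectic_map_shift:
  assumes f: "symplectic_map f" "f \<noteq> id" and iso: "\<And>x. symp_form (f x) x = 0"
  obtains u x where "fixed_space f \<subseteq> fixed_space (f \<circ> transvection u 1)"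
    "symp_form ((f \<circ> transvection u 1) x) x \<noteq> 0"
proof -
  obtain z where "f z \<noteq> z"
    using f(2) by (auto simp: fun_eq_iff)
  define u where "u = f z - z"
  have "u \<noteq> 0"
    using \<open>f z \<noteq> z\<close> by (simp add: u_def)
  then have "f u \<noteq> 0"
    using symplectic_map_inj[OF f(1)] linear_0[OF symplectic_mapD(1)[OF f(1)]] by (metis injD)
  then obtain a b where "symp_form u a \<noteq> 0" "symp_form (f u) b \<noteq> 0"
    using \<open>u \<noteq> 0\<close> symp_form_nondegenerate by metis
  moreover have "linear (symp_form v)" for v
    by (rule linearI) simp_all
  ultimately obtain x where x: "symp_form u x \<noteq> 0" "symp_form (f u) x \<noteq> 0"
    using polynomial_on_lines_common_nonzero polynomial_on_lines_linear by metis
  have "fixed_space f \<subseteq> fixed_space (f \<circ> transvection u 1)"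
    using symp_form_displacement_fixed[OF f(1)]
    by (auto simp: fixed_space_def u_def transvection_fixes)
  moreover have "symp_form ((f \<circ> transvection u 1) x) x = symp_form u x * symp_form (f u) x"
    using iso[of x] linear_add[OF symplectic_mapD(1)[OF f(1)]] linear_scale[OF symplectic_mapD(1)[OF f(1)]]
    by (simp add: transvection_def)
  ultimately show thesis
    using that[of u x] x by simp
qed

theorem transvection_decomposition:
  fixes f :: "'n::finite phase \<Rightarrow> 'n phase"
  assumes "symplectic_map f" "DIM('n phase) \<le> dim (fixed_space f) + k"
  shows "\<exists>L. length L \<le> 2 * k \<and> f = transvections L"
  using assms
proof (induction k arbitrary: f)
  case 0
  then have "f = id"
    using fixed_space_full_dim[OF symplectic_mapD(1)[OF "0.prems"(1)]] by simp
  then show ?case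
    by (intro exI[of _ "[]"]) simp
next
  case (Suc k)
  have peel: "\<exists>L. length L \<le> 2 * k + 1 \<and> g = transvections L"
    if g: "symplectic_map g" "dim (fixed_space f) \<le> dim (fixed_space g)" "symp_form (g x) x \<noteq> 0"
    for g :: "'n phase \<Rightarrow> 'n phase" and x
  proof -
    define t where "t = 1 / symp_form (g x) x"
    define g' where "g' = transvection (g x - x) (- t) \<circ> g"
    note peel = transvection_peel[OF g(1,3) g'_def[unfolded t_def]]
    have "DIM('n phase) \<le> dim (fixed_space g') + k"
      using peel(3) g(2) Suc.prems(2) by linarith
    then obtain L where L: "length L \<le> 2 * k" "g' = transvections L"
      using Suc.IH[OF peel(1)] by blast
    show ?thesis
    proof (intro exI conjI)
      show "length (L @ [(g x - x, t)]) \<le> 2 * k + 1"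
        using L(1) by simp
      show "g = transvections (L @ [(g x - x, t)])"
        unfolding transvections_snoc L(2)[symmetric] t_def by (rule peel(2))
    qed
  qed
  show ?case
  proof (cases "f = id")
    case True
    then show ?thesis by (intro exI[of _ "[]"]) simp
  next
    case False
    show ?thesis
    proof (cases "\<forall>x. symp_form (f x) x = 0")
      case False
      then obtain x where "symp_form (f x) x \<noteq> 0"
        by blast
      then obtain L where "length L \<le> 2 * k + 1" "f = transvections L"
        using peel[OF Suc.prems(1) order_refl] by blast
      then show ?thesis
        by (intro exI[of _ L]) simp
    next
      case True
      then obtain u x where u: "fixed_space f \<subseteq> fixed_space (f \<circ> transvection u 1)"
        "symp_form ((f \<circ> transvection u 1) x) x \<noteq> 0"
        using isotropic_symplectic_map_shift[OF Suc.prems(1) \<open>f \<noteq> id\<close>] by blast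
      have "symplectic_map (f \<circ> transvection u 1)"
        by (intro symplectic_map_comp Suc.prems(1) symplectic_map_transvection)
      then obtain L where L: "length L \<le> 2 * k + 1" "f \<circ> transvection u 1 = transvections L"
        using peel u dim_subset by metis
      show ?thesis
      proof (intro exI conjI)
        show "length ((u, - 1) # L) \<le> 2 * Suc k"
          using L(1) by simp
        show "f = transvections ((u, - 1) # L)"
          unfolding transvections_Cons L(2)[symmetric]
          by (simp add: comp_assoc transvection_inverse)
      qed
    qed
  qed
qed

lemma linear_add_id: "linear f \<Longrightarrow> linear (\<lambda>x. f x + x)"
  by (rule linearI) (simp_all add: linear_add linear_scale scaleR_add_right)

text \<open>If \<omega>(f a, a) vanished identically, f would be \<omega>-self-adjoint, hence an involution, and an
  involution without eigenvalue -1 is the identity.\<close>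
lemma exists_symp_form_nonzero:
  assumes f: "symplectic_map f" "f \<noteq> id" and inj: "inj (\<lambda>x. f x + x)"
  shows "\<exists>a. symp_form (f a) a \<noteq> 0"
proof (rule ccontr)
  assume "\<not> ?thesis"
  then have iso: "symp_form (f a) a = 0" for a
    by blast
  have lin: "linear f"
    using symplectic_mapD(1)[OF f(1)] .
  have adjoint: "symp_form (f x) y = symp_form x (f y)" for x y
    using iso[of "x + y"] iso[of x] iso[of y] symp_form_commute[of "f y" x]
    by (simp add: linear_add[OF lin])
  have involution: "f (f x) = x" for x
  proof -
    have "symp_form (f (f x) - x) (f y) = 0" for y
      using symplectic_mapD(2)[OF f(1), of "f x" y] adjoint[of x y] by simp
    then have "symp_form (f (f x) - x) q = 0" for q
      using symplectic_map_surj[OF f(1)] by (metis surjD)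
    then show ?thesis
      using symp_form_nondegenerate by fastforce
  qed
  have "f x = x" for x
  proof -
    have "f (f x - x) + (f x - x) = f 0 + 0"
      unfolding linear_diff[OF lin] linear_0[OF lin] involution by simp
    then have "f x - x = 0"
      by (rule injD[OF inj])
    then show ?thesis
      by simp
  qed
  then show False
    using f(2) by (simp add: fun_eq_iff)
qed

lemma exists_regular_peel_point:
  assumes f: "symplectic_map f" "f \<noteq> id" and inj: "inj (\<lambda>x. f x + x)"
  shows "\<exists>w. symp_form (f w) w \<noteq> 0 \<and> symp_form (f (f w + w)) (f w + w) \<noteq> 0"
proof -
  have lin: "linear f" "linear (\<lambda>x. f x + x)"
    using symplectic_mapD(1)[OF f(1)] linear_add_id by blast+
  obtain a where a: "symp_form (f a) a \<noteq> 0"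
    using exists_symp_form_nonzero[OF assms] by blast
  have "surj (\<lambda>x. f x + x)"
    by (simp add: linear_injective_imp_surjective lin(2) inj)
  then obtain b where "a = f b + b"
    using surjD[of _ a] by blast
  then have "symp_form (f (f b + b)) (f b + b) \<noteq> 0"
    using a by simp
  moreover have "polynomial_on_lines (\<lambda>w. symp_form (f w) w)"
    using polynomial_on_lines_symp_form[OF lin(1) linear_id] by (simp add: id_def)
  moreover have "polynomial_on_lines (\<lambda>w. symp_form (f (f w + w)) (f w + w))"
    using polynomial_on_lines_symp_form[OF linear_compose[OF lin(2,1)] lin(2)] by (simp add: o_def)
  ultimately show ?thesis
    using a polynomial_on_lines_common_nonzero by blast
qed

text \<open>Peeling at x = f w + w, with \<omega>(f w, w) \<noteq> 0, keeps -1 out of the spectrum: a vector y with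
  g y = -y would be a multiple of f w - w, which forces \<omega>(f w, w) = 0.\<close>
lemma transvection_peel_inj_plus_id:
  assumes f: "symplectic_map f" and inj: "inj (\<lambda>x. f x + x)" and w: "symp_form (f w) w \<noteq> 0"
    and x: "x = f w + w" and g: "g = transvection (f x - x) (- (1 / symp_form (f x) x)) \<circ> f"
  shows "inj (\<lambda>y. g y + y)"
proof -
  define u where "u = f x - x"
  define t where "t = 1 / symp_form (f x) x"
  have lin: "linear f"
    using symplectic_mapD(1)[OF f] .
  have "linear g"
    unfolding g by (intro symplectic_mapD(1) symplectic_map_comp symplectic_map_transvection f)
  then have lin_g: "linear (\<lambda>y. g y + y)"
    by (rule linear_add_id)
  have u: "u = f (f w - w) + (f w - w)"
    by (simp add: u_def x linear_diff[OF lin] linear_add[OF lin])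
  have "y = 0" if "g y + y = 0" for y
  proof (rule ccontr)
    assume "y \<noteq> 0"
    define c where "c = t * symp_form u (f y)"
    have "f y + y = c *\<^sub>R u"
      using that by (simp add: g transvection_def c_def u_def t_def algebra_simps)
    also have "\<dots> = f (c *\<^sub>R (f w - w)) + c *\<^sub>R (f w - w)"
      unfolding u by (simp only: linear_scale[OF lin] scaleR_add_right)
    finally have "f y + y = f (c *\<^sub>R (f w - w)) + c *\<^sub>R (f w - w)" .
    then have y: "y = c *\<^sub>R (f w - w)"
      by (rule injD[OF inj])
    then have "c \<noteq> 0"
      using \<open>y \<noteq> 0\<close> by auto
    moreover have "c = c * (t * symp_form u (f (f w) - f w))"
    proof -
      have "c = t * symp_form u (f y)"
        by (rule c_def)
      also have "\<dots> = c * (t * symp_form u (f (f w) - f w))"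
        unfolding y by (simp add: linear_scale[OF lin] linear_diff[OF lin] mult.left_commute)
      finally show ?thesis .
    qed
    ultimately have "t * symp_form u (f (f w) - f w) = 1"
      by simp
    then have "symp_form u (f (f w) - f w) = symp_form u x"
      by (cases "symp_form u x = 0") (simp_all add: t_def u_def field_simps)
    moreover have "symp_form (f (f w)) (f w) = symp_form (f w) w"
      using symplectic_mapD(2)[OF f] .
    ultimately have "4 * symp_form (f w) w = 0"
      using symp_form_commute[of w "f (f w)"] symp_form_commute[of w "f w"]
        symp_form_commute[of "f w" "f (f w)"]
      by (simp add: u_def x linear_add[OF lin] algebra_simps)
    then show False
      using w by simp
  qed
  then show ?thesis
    using linear_injective_0[OF lin_g] by blast
qed

theorem transvection_decomposition_inj_plus_id:
  fixes f :: "'n::finite phase \<Rightarrow> 'n phase"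
  assumes "symplectic_map f" "inj (\<lambda>x. f x + x)" "DIM('n phase) \<le> dim (fixed_space f) + k"
  shows "\<exists>L. length L \<le> k \<and> f = transvections L"
  using assms
proof (induction k arbitrary: f)
  case 0
  then have "f = id"
    using fixed_space_full_dim[OF symplectic_mapD(1)[OF "0.prems"(1)]] by simp
  then show ?case
    by (intro exI[of _ "[]"]) simp
next
  case (Suc k)
  show ?case
  proof (cases "f = id")
    case True
    then show ?thesis by (intro exI[of _ "[]"]) simp
  next
    case False
    then obtain w where w: "symp_form (f w) w \<noteq> 0" "symp_form (f (f w + w)) (f w + w) \<noteq> 0"
      using exists_regular_peel_point[OF Suc.prems(1) _ Suc.prems(2)] by blast
    define x where "x = f w + w"
    define t where "t = 1 / symp_form (f x) x"
    define g where "g = transvection (f x - x) (- t) \<circ> f"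
    note peel = transvection_peel[OF Suc.prems(1) w(2)[folded x_def] g_def[unfolded t_def]]
    have "inj (\<lambda>y. g y + y)"
      by (rule transvection_peel_inj_plus_id[OF Suc.prems(1,2) w(1) x_def g_def[unfolded t_def]])
    moreover have "DIM('n phase) \<le> dim (fixed_space g) + k"
      using peel(3) Suc.prems(3) by linarith
    ultimately obtain L where L: "length L \<le> k" "g = transvections L"
      using Suc.IH[OF peel(1)] by blast
    show ?thesis
    proof (intro exI conjI)
      show "length (L @ [(f x - x, t)]) \<le> Suc k"
        using L(1) by simp
      show "f = transvections (L @ [(f x - x, t)])"
        unfolding transvections_snoc L(2)[symmetric] t_def by (rule peel(2))
    qed
  qed
qed

lemma mat_pow_add: "mat_pow A i ** mat_pow A j = mat_pow A (i + j)"
  by (induction i) (simp_all add: matrix_mul_lid matrix_mul_assoc[symmetric])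

lemma mat_pow_Suc_right: "mat_pow A k ** A = mat_pow A (Suc k)"
  using mat_pow_add[of A k 1] by (simp add: matrix_mul_rid)

lemma norm_mat_pow_mult_le:
  fixes A :: "real ^ 'm::finite ^ 'm"
  shows "norm (mat_pow A k *v v) \<le> onorm ((*v) A) ^ k * norm v"
proof (induction k)
  case 0
  then show ?case by (simp add: matrix_vector_mul_lid)
next
  case (Suc k)
  have "mat_pow A (Suc k) *v v = A *v (mat_pow A k *v v)"
    by (simp add: matrix_vector_mul_assoc)
  then have "norm (mat_pow A (Suc k) *v v) \<le> onorm ((*v) A) * norm (mat_pow A k *v v)"
    using onorm[OF matrix_vector_mul_bounded_linear] by simp
  also have "\<dots> \<le> onorm ((*v) A) * (onorm ((*v) A) ^ k * norm v)"
    using Suc onorm_pos_le[OF matrix_vector_mul_bounded_linear] by (rule mult_left_mono)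
  finally show ?case
    by simp
qed

lemma norm_matrix_le_sum_abs:
  fixes M :: "real ^ 'n::finite ^ 'm::finite"
  shows "norm M \<le> (\<Sum>i\<in>UNIV. \<Sum>j\<in>UNIV. \<bar>M $ i $ j\<bar>)"
proof -
  have "norm M \<le> (\<Sum>i\<in>UNIV. norm (M $ i))"
    unfolding norm_vec_def by (rule L2_set_le_sum) simp
  also have "\<dots> \<le> (\<Sum>i\<in>UNIV. \<Sum>j\<in>UNIV. \<bar>M $ i $ j\<bar>)"
    by (intro sum_mono norm_le_l1_cart)
  finally show ?thesis .
qed

lemma summable_mat_exp:
  fixes A :: "real ^ 'm::finite ^ 'm"
  shows "summable (\<lambda>k. (1 / fact k) *\<^sub>R mat_pow A k)"
proof -
  define K where "K = onorm ((*v) A)"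
  define C where "C = real (CARD('m) * CARD('m))"
  have entry: "\<bar>mat_pow A k $ i $ j\<bar> \<le> K ^ k" for k i j
  proof -
    have "mat_pow A k $ i $ j = (mat_pow A k *v axis j 1) $ i"
      by (simp add: matrix_vector_mult_basis column_def)
    also have "\<bar>\<dots>\<bar> \<le> norm (mat_pow A k *v axis j 1)"
      by (rule component_le_norm_cart)
    also have "\<dots> \<le> K ^ k"
      using norm_mat_pow_mult_le[of A k "axis j 1"] by (simp add: K_def)
    finally show ?thesis .
  qed
  have "norm (mat_pow A k) \<le> C * K ^ k" for k
  proof -
    have "norm (mat_pow A k) \<le> (\<Sum>i\<in>UNIV. \<Sum>j\<in>UNIV. \<bar>mat_pow A k $ i $ j\<bar>)"
      by (rule norm_matrix_le_sum_abs)
    also have "\<dots> \<le> (\<Sum>i\<in>(UNIV :: 'm set). \<Sum>j\<in>(UNIV :: 'm set). K ^ k)"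
      by (intro sum_mono entry)
    finally show ?thesis
      by (simp add: C_def)
  qed
  then have "norm ((1 / fact k) *\<^sub>R mat_pow A k) \<le> C * (K ^ k /\<^sub>R fact k)" for k
    using divide_right_mono[of "norm (mat_pow A k)" "C * K ^ k" "fact k"]
    by (simp add: divide_inverse ac_simps)
  moreover have "summable (\<lambda>k. C * (K ^ k /\<^sub>R fact k))"
    by (intro summable_mult summable_exp_generic)
  ultimately have "summable (\<lambda>k. norm ((1 / fact k) *\<^sub>R mat_pow A k))"
    by (intro summable_norm_comparison_test[where g = "\<lambda>k. C * (K ^ k /\<^sub>R fact k)"]) auto
  then show ?thesis
    by (rule summable_norm_cancel)
qed

lemma summable_norm_exp_series:
  fixes A :: "real ^ 'm::finite ^ 'm"
  shows "summable (\<lambda>k. norm ((1 / fact k) *\<^sub>R (mat_pow A k *v v)))"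
proof (rule summable_norm_comparison_test)
  show "summable (\<lambda>k. norm v * (onorm ((*v) A) ^ k /\<^sub>R fact k))"
    by (intro summable_mult summable_exp_generic)
  show "\<exists>N. \<forall>k\<ge>N. norm ((1 / fact k) *\<^sub>R (mat_pow A k *v v)) \<le> norm v * (onorm ((*v) A) ^ k /\<^sub>R fact k)"
    using norm_mat_pow_mult_le[of A _ v] by (auto simp: divide_simps mult.commute)
qed

lemma mat_exp_mult_vector:
  fixes A :: "real ^ 'm::finite ^ 'm"
  shows "mat_exp A *v v = (\<Sum>k. (1 / fact k) *\<^sub>R (mat_pow A k *v v))"
proof -
  have "bounded_linear (\<lambda>M :: real ^ 'm ^ 'm. M *v v)"
    unfolding linear_conv_bounded_linear[symmetric]
    by (rule linearI) (simp_all add: matrix_vector_mult_add_rdistrib scaleR_matrix_vector_assoc)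
  from bounded_linear.suminf[OF this summable_mat_exp[of A]] show ?thesis
    by (simp add: mat_exp_def scaleR_matrix_vector_assoc)
qed

lemma norm_mat_exp_mult_diff_le:
  fixes A :: "real ^ 'm::finite ^ 'm"
  shows "norm (mat_exp A *v v - v) \<le> (exp (onorm ((*v) A)) - 1) * norm v"
proof -
  define K where "K = onorm ((*v) A)"
  define a where "a k = (1 / fact k) *\<^sub>R (mat_pow A k *v v)" for k
  have a: "summable (\<lambda>k. norm (a k))"
    unfolding a_def by (rule summable_norm_exp_series)
  have a_Suc: "summable (\<lambda>k. norm (a (Suc k)))"
    using a by (subst summable_Suc_iff)
  have exp_Suc: "(\<lambda>k. K ^ Suc k /\<^sub>R fact (Suc k)) sums (exp K - 1)"
    using sums_Suc_iff[of "\<lambda>k. K ^ k /\<^sub>R fact k" "exp K - 1"] exp_converges[of K]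
    by (simp del: fact_Suc power_Suc)
  have "mat_exp A *v v - v = (\<Sum>k. a (Suc k))"
    using suminf_split_head[OF summable_norm_cancel[OF a]]
    by (simp add: a_def mat_exp_mult_vector matrix_vector_mul_lid)
  then have "norm (mat_exp A *v v - v) \<le> (\<Sum>k. norm (a (Suc k)))"
    using summable_norm[OF a_Suc] by simp
  also have "\<dots> \<le> (\<Sum>k. norm v * (K ^ Suc k /\<^sub>R fact (Suc k)))"
  proof (rule suminf_le)
    show "norm (a (Suc k)) \<le> norm v * (K ^ Suc k /\<^sub>R fact (Suc k))" for k
      using norm_mat_pow_mult_le[of A "Suc k" v] unfolding a_def K_def
      by (simp add: divide_simps mult.commute del: fact_Suc power_Suc)
  qed (use a_Suc exp_Suc in \<open>auto intro: summable_mult simp: sums_iff\<close>)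
  also have "\<dots> = norm v * (exp K - 1)"
    using sums_mult[OF exp_Suc, of "norm v"] by (simp add: sums_iff)
  finally show ?thesis
    by (simp add: K_def mult.commute)
qed

lemma inj_mat_exp_add_id:
  fixes A :: "real ^ 'm::finite ^ 'm"
  assumes "onorm ((*v) A) \<le> 1 / 2"
  shows "inj (\<lambda>x. mat_exp A *v x + x)"
proof -
  have "v = 0" if "mat_exp A *v v + v = 0" for v
  proof -
    have "mat_exp A *v v = - v"
      using that by (simp add: eq_neg_iff_add_eq_0)
    then have "mat_exp A *v v - v = - (2 *\<^sub>R v)"
      by (simp add: scaleR_2)
    then have "2 * norm v = norm (mat_exp A *v v - v)"
      by simp
    also have "\<dots> \<le> (exp (onorm ((*v) A)) - 1) * norm v"
      by (rule norm_mat_exp_mult_diff_le)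
    also have "\<dots> \<le> 1 * norm v"
      using real_exp_bound_lemma[OF onorm_pos_le[OF matrix_vector_mul_bounded_linear] assms] assms
      by (intro mult_right_mono) auto
    finally show "v = 0"
      by simp
  qed
  then show ?thesis
    using linear_injective_0[OF linear_add_id[OF matrix_vector_mul_linear]] by blast
qed

lemma norm_Jmat_mult: "norm (Jmat *v x) = norm (x :: 'n::finite phase)"
  by (simp add: norm_eq_sqrt_inner inner_Jmat_Jmat)

lemma symp_form_eq_inner: "symp_form u x = - ((Jmat *v u) \<bullet> x)"
  using symp_form_commute[of u x] by (simp add: symp_form_def inner_commute)

definition hamiltonian_matrix :: "real ^ ('n::finite + 'n) ^ ('n + 'n) \<Rightarrow> bool" where
  "hamiltonian_matrix A \<longleftrightarrow> (\<forall>p q. symp_form (A *v p) q = - symp_form p (A *v q))"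

lemma hamiltonian_matrix_Jmat_mult:
  fixes M :: "real ^ ('n::finite + 'n) ^ ('n + 'n)"
  assumes "transpose M = M"
  shows "hamiltonian_matrix (Jmat ** M)"
  unfolding hamiltonian_matrix_def
proof (intro allI)
  fix p q :: "'n phase"
  have "symp_form ((Jmat ** M) *v p) q = (M *v p) \<bullet> q"
    by (simp add: symp_form_def inner_Jmat_Jmat matrix_vector_mul_assoc[symmetric])
  also have "\<dots> = p \<bullet> (M *v q)"
    using assms by (metis dot_lmul_matrix vector_transpose_matrix inner_commute)
  also have "\<dots> = - symp_form p ((Jmat ** M) *v q)"
    by (simp add: symp_form_def Jmat_Jmat matrix_vector_mul_assoc[symmetric])
  finally show "symp_form ((Jmat ** M) *v p) q = - symp_form p ((Jmat ** M) *v q)" .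
qed

lemma hamiltonian_matrix_scaleR: "hamiltonian_matrix A \<Longrightarrow> hamiltonian_matrix (c *\<^sub>R A)"
  by (simp add: hamiltonian_matrix_def scaleR_matrix_vector_assoc[symmetric])

lemma symp_form_mat_pow:
  assumes "hamiltonian_matrix A"
  shows "symp_form (mat_pow A i *v p) q = (- 1) ^ i * symp_form p (mat_pow A i *v q)"
proof (induction i arbitrary: q)
  case 0
  then show ?case by (simp add: matrix_vector_mul_lid)
next
  case (Suc i)
  have "symp_form (mat_pow A (Suc i) *v p) q = - symp_form (mat_pow A i *v p) (A *v q)"
    using assms by (simp add: hamiltonian_matrix_def matrix_vector_mul_assoc[symmetric])
  also have "\<dots> = (- 1) ^ Suc i * symp_form p (mat_pow A (Suc i) *v q)"
    by (simp add: Suc matrix_vector_mul_assoc mat_pow_Suc_right)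
  finally show ?case .
qed

lemma sum_alternating_inverse_fact:
  assumes "0 < k"
  shows "(\<Sum>i\<le>k. (- 1) ^ i / (fact i * fact (k - i))) = (0 :: real)"
proof -
  have "(\<Sum>i\<le>k. (- 1) ^ i / (fact i * fact (k - i))) = (\<Sum>i\<le>k. (- 1) ^ i * of_nat (k choose i)) / (fact k :: real)"
    by (simp add: sum_divide_distrib binomial_fact)
  also have "\<dots> = 0"
    using choose_alternating_sum[OF assms] by simp
  finally show ?thesis .
qed

lemma inner_suminf_Cauchy_product:
  fixes a b :: "nat \<Rightarrow> 'a::euclidean_space"
  assumes a: "summable (\<lambda>k. norm (a k))" and b: "summable (\<lambda>k. norm (b k))"
  shows "suminf a \<bullet> suminf b = (\<Sum>k. \<Sum>j\<le>k. a j \<bullet> b (k - j))"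
proof -
  have coord: "suminf c \<bullet> i = (\<Sum>k. c k \<bullet> i)" and abs_coord: "summable (\<lambda>k. norm (c k \<bullet> i))"
    if "summable (\<lambda>k. norm (c k))" "i \<in> Basis" for c :: "nat \<Rightarrow> 'a" and i
  proof -
    show "suminf c \<bullet> i = (\<Sum>k. c k \<bullet> i)"
      using bounded_linear.suminf[OF bounded_linear_inner_left summable_norm_cancel[OF that(1)]] by simp
    show "summable (\<lambda>k. norm (c k \<bullet> i))"
      using that by (intro summable_comparison_test[OF _ that(1)]) (auto intro: Basis_le_norm)
  qed
  have "suminf a \<bullet> suminf b = (\<Sum>i\<in>Basis. (\<Sum>k. a k \<bullet> i) * (\<Sum>k. b k \<bullet> i))"
    by (subst euclidean_inner) (simp add: coord a b)
  also have "\<dots> = (\<Sum>i\<in>Basis. \<Sum>k. \<Sum>j\<le>k. (a j \<bullet> i) * (b (k - j) \<bullet> i))"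
    by (intro sum.cong refl Cauchy_product abs_coord a b)
  also have "\<dots> = (\<Sum>k. \<Sum>i\<in>Basis. \<Sum>j\<le>k. (a j \<bullet> i) * (b (k - j) \<bullet> i))"
    by (intro suminf_sum[symmetric] summable_Cauchy_product abs_coord a b)
  also have "\<dots> = (\<Sum>k. \<Sum>j\<le>k. a j \<bullet> b (k - j))"
    by (subst sum.swap) (simp only: euclidean_inner[symmetric])
  finally show ?thesis .
qed

text \<open>The Cauchy product of the two exponential series collapses because the k-th term is
  \<omega>(x, A^k y) times the alternating sum of 1/(j! (k-j)!).\<close>
lemma symplectic_map_mat_exp:
  fixes A :: "real ^ ('n::finite + 'n) ^ ('n + 'n)"
  assumes "hamiltonian_matrix A"
  shows "symplectic_map ((*v) (mat_exp A))"
  unfolding symplectic_map_def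
proof (intro conjI allI matrix_vector_mul_linear)
  fix x y :: "'n phase"
  define a where "a k = (1 / fact k) *\<^sub>R (mat_pow A k *v x)" for k
  define c where "c k = (1 / fact k) *\<^sub>R (mat_pow A k *v y)" for k
  have sa: "summable (\<lambda>k. norm (a k))" and sc: "summable (\<lambda>k. norm (Jmat *v c k))"
    unfolding a_def c_def norm_Jmat_mult by (rule summable_norm_exp_series)+
  have "Jmat *v (mat_exp A *v y) = (\<Sum>k. Jmat *v c k)"
    using bounded_linear.suminf[OF matrix_vector_mul_bounded_linear summable_norm_cancel[OF sc[unfolded norm_Jmat_mult]]]
    by (simp add: c_def mat_exp_mult_vector)
  then have "symp_form (mat_exp A *v x) (mat_exp A *v y) = (\<Sum>k. \<Sum>j\<le>k. symp_form (a j) (c (k - j)))"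
    using inner_suminf_Cauchy_product[OF sa sc]
    by (simp add: symp_form_def a_def mat_exp_mult_vector)
  also have "\<dots> = (\<Sum>k. if k = 0 then symp_form x y else 0)"
  proof (rule arg_cong[where f = suminf], rule ext)
    fix k
    have "symp_form (a j) (c (k - j)) = symp_form x (mat_pow A k *v y) * ((- 1) ^ j / (fact j * fact (k - j)))"
      if "j \<le> k" for j
      using that symp_form_mat_pow[OF assms, of j x "mat_pow A (k - j) *v y"]
      by (simp add: a_def c_def matrix_vector_mul_assoc mat_pow_add ac_simps)
    then have "(\<Sum>j\<le>k. symp_form (a j) (c (k - j)))
        = symp_form x (mat_pow A k *v y) * (\<Sum>j\<le>k. (- 1) ^ j / (fact j * fact (k - j)))"
      by (simp add: sum_distrib_left)
    then show "(\<Sum>j\<le>k. symp_form (a j) (c (k - j))) = (if k = 0 then symp_form x y else 0)"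
      by (simp add: sum_alternating_inverse_fact matrix_vector_mul_lid)
  qed
  also have "\<dots> = symp_form x y"
    using sums_single[of 0 "\<lambda>_. symp_form x y"] by (simp add: sums_iff)
  finally show "symp_form (mat_exp A *v x) (mat_exp A *v y) = symp_form x y" .
qed


text \<open>With w = -J u and \<alpha>(z) = t z^2 / (2 h) the layer x + h \<alpha>'(w \<bullet> x) J w is exactly the
  transvection x + t \<omega>(u, x) u.\<close>
definition transvection_layer :: "real \<Rightarrow> 'n::finite phase \<times> real \<Rightarrow> 'n phase \<times> real poly" where
  "transvection_layer h = (\<lambda>(u, t). (- (Jmat *v u), [:0, 0, t / (2 * h):]))"

lemma psymp_layer_transvection_layer:
  assumes "h \<noteq> 0"
  shows "psymp_layer h (transvection_layer h (u, t)) = transvection u t"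
  using assms
  by (simp add: fun_eq_iff psymp_layer_def transvection_layer_def transvection_def
      pderiv_pCons Jmat_Jmat symp_form_eq_inner)

lemma psympnet_transvection_layers:
  fixes L :: "('n::finite phase \<times> real) list"
  assumes "h \<noteq> 0"
  shows "psympnet h (map (transvection_layer h) L) = transvections L"
proof -
  have "psymp_layer h \<circ> transvection_layer h = (\<lambda>(u, t). transvection u t :: 'n phase \<Rightarrow> _)"
    using psymp_layer_transvection_layer[OF assms] by (auto simp: fun_eq_iff)
  then show ?thesis
    by (simp only: psympnet_def[abs_def] transvections_def fold_map)
qed

lemma valid_psymp_transvection_layers:
  "2 \<le> d \<Longrightarrow> valid_psymp d (map (transvection_layer h) L)"
  by (auto simp: valid_psymp_def transvection_layer_def)

lemma psympnet_eq_transvections: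
  assumes "2 \<le> d" "h \<noteq> 0"
  shows "\<exists>ls. valid_psymp d ls \<and> length ls = length L \<and> psympnet h ls = transvections L"
  by (intro exI[of _ "map (transvection_layer h) L"] conjI valid_psymp_transvection_layers
      psympnet_transvection_layers assms) simp

lemma DIM_phase: "DIM('n::finite phase) = 2 * CARD('n)"
  by (simp add: card_sum)

lemma symplectic_matrix_psympnet:
  fixes S :: "real ^ ('n::finite + 'n) ^ ('n + 'n)"
  assumes "2 \<le> d" "symplectic S" "h \<noteq> 0"
  shows "\<exists>ls. valid_psymp d ls \<and> length ls \<le> 4 * CARD('n) \<and> (\<forall>x. S *v x = psympnet h ls x)"
proof -
  obtain L where "length L \<le> 2 * DIM('n phase)" "(*v) S = transvections L"
    using transvection_decomposition[OF symplectic_map_matrix[OF assms(2)], of "DIM('n phase)"]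
    by auto
  moreover obtain ls where "valid_psymp d ls" "length ls = length L" "psympnet h ls = transvections L"
    using psympnet_eq_transvections[OF assms(1,3)] by blast
  ultimately show ?thesis
    by (intro exI[of _ ls]) (simp add: DIM_phase fun_eq_iff)
qed

lemma mat_exp_hamiltonian_psympnet:
  fixes M :: "real ^ ('n::finite + 'n) ^ ('n + 'n)"
  assumes "2 \<le> d" "transpose M = M"
  shows "\<exists>h0>0. \<forall>h. 0 < h \<and> h < h0 \<longrightarrow> (\<exists>ls. valid_psymp d ls \<and> length ls \<le> 2 * CARD('n) \<and>
           (\<forall>x. mat_exp (h *\<^sub>R (Jmat ** M)) *v x = psympnet h ls x))"
proof -
  define K where "K = onorm ((*v) (Jmat ** M))"
  have "0 \<le> K"
    unfolding K_def by (rule onorm_pos_le[OF matrix_vector_mul_bounded_linear])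
  show ?thesis
  proof (intro exI[of _ "1 / (2 * (K + 1))"] conjI allI impI)
    show "0 < 1 / (2 * (K + 1))"
      using \<open>0 \<le> K\<close> by simp
    fix h assume h: "0 < h \<and> h < 1 / (2 * (K + 1))"
    define A where "A = h *\<^sub>R (Jmat ** M)"
    have "(*v) A = (\<lambda>x. h *\<^sub>R ((Jmat ** M) *v x))"
      by (simp add: A_def fun_eq_iff scaleR_matrix_vector_assoc)
    then have "onorm ((*v) A) = h * K"
      using h by (simp add: K_def onorm_scaleR[OF matrix_vector_mul_bounded_linear])
    also have "\<dots> \<le> K / (2 * (K + 1))"
      using mult_right_mono[of h "1 / (2 * (K + 1))" K] h \<open>0 \<le> K\<close> by simp
    also have "\<dots> \<le> 1 / 2"
      using \<open>0 \<le> K\<close> by (simp add: field_simps)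
    finally have "inj (\<lambda>x. mat_exp A *v x + x)"
      by (rule inj_mat_exp_add_id)
    moreover have "symplectic_map ((*v) (mat_exp A))"
      unfolding A_def
      by (intro symplectic_map_mat_exp hamiltonian_matrix_scaleR hamiltonian_matrix_Jmat_mult assms(2))
    ultimately obtain L where "length L \<le> DIM('n phase)" "(*v) (mat_exp A) = transvections L"
      using transvection_decomposition_inj_plus_id[of "(*v) (mat_exp A)" "DIM('n phase)"] by auto
    moreover obtain ls where "valid_psymp d ls" "length ls = length L" "psympnet h ls = transvections L"
      using psympnet_eq_transvections[OF assms(1), of h L] h by auto
    ultimately show "\<exists>ls. valid_psymp d ls \<and> length ls \<le> 2 * CARD('n) \<and>
        (\<forall>x. mat_exp (h *\<^sub>R (Jmat ** M)) *v x = psympnet h ls x)"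
      by (intro exI[of _ ls]) (simp add: DIM_phase fun_eq_iff A_def)
  qed
qed

theorem theorem2:
  fixes d :: nat
  assumes "d \<ge> 2"
  shows "(\<forall>S :: real ^ ('n::finite + 'n) ^ ('n + 'n). symplectic S \<longrightarrow>
            (\<forall>h > 0. \<exists>ls. valid_psymp d ls \<and> length ls \<le> 5 * CARD('n) \<and>
               (\<forall>x. S *v x = psympnet h ls x)))
       \<and> (\<forall>S :: real ^ ('n + 'n) ^ ('n + 'n). symplectic S \<and> det (block_A S) \<noteq> 0 \<longrightarrow>
            (\<forall>h > 0. \<exists>ls. valid_psymp d ls \<and> length ls \<le> 4 * CARD('n) \<and>
               (\<forall>x. S *v x = psympnet h ls x)))
       \<and> (\<forall>M :: real ^ ('n + 'n) ^ ('n + 'n). transpose M = M \<longrightarrow>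
            (\<exists>h0 > 0. \<forall>h. 0 < h \<and> h < h0 \<longrightarrow>
               (\<exists>ls. valid_psymp d ls \<and> length ls \<le> 2 * CARD('n) \<and>
                  (\<forall>x. mat_exp (h *\<^sub>R (Jmat ** M)) *v x = psympnet h ls x))))"
proof (intro conjI allI impI)
  fix S :: "real ^ ('n + 'n) ^ ('n + 'n)" and h :: real
  assume "symplectic S" "h > 0"
  then obtain ls where "valid_psymp d ls" "length ls \<le> 4 * CARD('n)" "\<forall>x. S *v x = psympnet h ls x"
    using symplectic_matrix_psympnet[OF assms, of S h] by auto
  then show "\<exists>ls. valid_psymp d ls \<and> length ls \<le> 5 * CARD('n) \<and> (\<forall>x. S *v x = psympnet h ls x)"
    by (intro exI[of _ ls]) simp
next
  \<comment> \<open>the bound 4n holds for every symplectic matrix\<close>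
  fix S :: "real ^ ('n + 'n) ^ ('n + 'n)" and h :: real
  assume "symplectic S \<and> det (block_A S) \<noteq> 0" "h > 0"
  then show "\<exists>ls. valid_psymp d ls \<and> length ls \<le> 4 * CARD('n) \<and> (\<forall>x. S *v x = psympnet h ls x)"
    using symplectic_matrix_psympnet[OF assms, of S h] by simp
next
  fix M :: "real ^ ('n + 'n) ^ ('n + 'n)"
  assume "transpose M = M"
  then show "\<exists>h0>0. \<forall>h. 0 < h \<and> h < h0 \<longrightarrow> (\<exists>ls. valid_psymp d ls \<and> length ls \<le> 2 * CARD('n) \<and>
           (\<forall>x. mat_exp (h *\<^sub>R (Jmat ** M)) *v x = psympnet h ls x))"
    by (rule mat_exp_hamiltonian_psympnet[OF assms])
qed

end
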